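(* Let $\mathbb F$ be an algebraically closed field and $\lambda\in\overline{\mathbb F}$. (1) If $C(s)\in\mathbb F[s]^{p_1\times q_1}$, $D(s)\in\mathbb F[s]^{p_2\times q_2}$ are pencils and $A(s)=\begin{bmatrix}C(s)&0\\0&D(s)\end{bmatrix}$, then $\dim\mathcal L^i_\lambda(A(s))=\dim\mathcal L^i_\lambda(C(s))+\dim\mathcal L^i_\lambda(D(s))$ for all $i\ge0$. (2) If $C(s)\in\mathbb F[s]^{p\times q_1}$ and $A(s)=\begin{bmatrix}C(s)&0\end{bmatrix}\in\mathbb F[s]^{p\times(q_1+q_2)}$, then $\dim\mathcal L^i_\lambda(A(s))=\dim\mathcal L^i_\lambda(C(s))+q_2$ for all $i\ge1$. (3) If $C(s)\in\mathbb F[s]^{p_1\times q}$ and $A(s)=\begin{bmatrix}C(s)\\0\end{bmatrix}\in\mathbb F[s]^{(p_1+p_2)\times q}$, then $\dim\mathcal L^i_\lambda(A(s))=\dim\mathcal L^i_\lambda(C(s))$ for all $i\ge0$.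
   Context: A pencil is $A(s)=A_0+sA_1$ with constant matrices $A_0,A_1$; $A(\infty):=A_1$, $\overline{\mathbb F}=\mathbb F\cup\{\infty\}$. A Jordan chain at $\lambda$ of length $k+1$ is $(x_k,\dots,x_0)$ of column vectors (of size the number of columns), $x_0\ne0$, with $A(\lambda)x_0=0$, $A(\lambda)x_i=-A_1x_{i-1}$ ($1\le i\le k$) if $\lambda\in\mathbb F$, and $A_1x_0=0$, $A_1x_i=-A_0x_{i-1}$ if $\lambda=\infty$. $\mathcal L^\ell_\lambda(A(s))$ ($\ell\ge1$) is the span of the vectors of all Jordan chains at $\lambda$ of length $\le\ell$ (and $\{0\}$ if there are none), $\mathcal L^0_\lambda(A(s))=\{0\}$. *)

theory Defs
  imports "Jordan_Normal_Form.VS_Connect" "HOL-Computational_Algebra.Polynomial"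
begin

datatype 'a ext_pt = Fin 'a | Infty

text \<open>A pencil A(s) = A0 + s A1 is represented by the pair of constant matrices (A0, A1),
  both of the same dimension p x q.  A Jordan chain (x_k, ..., x_0) is represented
  by the list xs with xs ! i = x_i.\<close>
definition jordan_chain ::
  "'a::field mat \<Rightarrow> 'a mat \<Rightarrow> 'a ext_pt \<Rightarrow> 'a vec list \<Rightarrow> bool" where
  "jordan_chain A0 A1 lam xs \<longleftrightarrow>
     xs \<noteq> [] \<and> set xs \<subseteq> carrier_vec (dim_col A0) \<and> xs ! 0 \<noteq> 0\<^sub>v (dim_col A0) \<and>
     (case lam of
        Fin l \<Rightarrow> (A0 + l \<cdot>\<^sub>m A1) *\<^sub>v (xs ! 0) = 0\<^sub>v (dim_row A0) \<and>
                 (\<forall>i. 1 \<le> i \<and> i < length xs \<longrightarrow>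
                      (A0 + l \<cdot>\<^sub>m A1) *\<^sub>v (xs ! i) = - (A1 *\<^sub>v (xs ! (i - 1))))
      | Infty \<Rightarrow> A1 *\<^sub>v (xs ! 0) = 0\<^sub>v (dim_row A0) \<and>
                 (\<forall>i. 1 \<le> i \<and> i < length xs \<longrightarrow>
                      A1 *\<^sub>v (xs ! i) = - (A0 *\<^sub>v (xs ! (i - 1)))))"

definition jordan_space ::
  "nat \<Rightarrow> 'a::field mat \<Rightarrow> 'a mat \<Rightarrow> 'a ext_pt \<Rightarrow> 'a vec set" where
  "jordan_space l A0 A1 lam =
     (if l = 0 then {0\<^sub>v (dim_col A0)}
      else LinearCombinations.module.span class_ring (module_vec TYPE('a) (dim_col A0))
             {v. \<exists>xs. jordan_chain A0 A1 lam xs \<and> length xs \<le> l \<and> v \<in> set xs})"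

definition subspace_dim :: "nat \<Rightarrow> 'a::field vec set \<Rightarrow> nat" where
  "subspace_dim n W = vectorspace.dim class_ring ((module_vec TYPE('a) n)\<lparr>carrier := W\<rparr>)"

end

theory Submission
  imports Defs
begin

(* Both cases of a Jordan chain are governed by the recurrence N x_0 = 0,
   N x_i = - E x_(i-1).  Call a list of vectors satisfying it, but possibly starting with
   zero vectors, a chain sequence: stripping its leading zeros leaves a Jordan chain, so L^l
   is also the span of all entries of chain sequences of length at most l.  Consequently
   every linear map sending chain sequences of one pencil to chain sequences of another maps
   L^l into L^l.  For a block-diagonal pencil a list is a chain sequence iff both of its
   block components are, so applying this to the projections onto, and the embeddings of,
   the two blocks gives L^l(diag(C, D)) = L^l(C) x L^l(D), whence (1).  Parts (2) and (3)
   are the cases where D has no rows (every vector is then a chain of length one) or no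
   columns. *)

section \<open>Direct sums of coordinate subspaces\<close>

lemma zero_append_zero_vec: "0\<^sub>v n1 @\<^sub>v 0\<^sub>v n2 = (0\<^sub>v (n1 + n2) :: 'a::zero vec)"
  by (rule eq_vecI) auto

lemma smult_append_vec: "(c::'a::semiring_1) \<cdot>\<^sub>v (u @\<^sub>v w) = (c \<cdot>\<^sub>v u) @\<^sub>v (c \<cdot>\<^sub>v w)"
  by (rule eq_vecI) (auto simp: append_vec_def Let_def)

lemma vec_first_append: "u \<in> carrier_vec n \<Longrightarrow> vec_first (u @\<^sub>v w) n = u"
  by (rule eq_vecI) (auto simp: vec_first_def)

lemma vec_last_append: "w \<in> carrier_vec n \<Longrightarrow> vec_last (u @\<^sub>v w) n = w"
  by (rule eq_vecI) (auto simp: vec_last_def)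

lemma vec_first_add:
  "x \<in> carrier_vec (n + m) \<Longrightarrow> y \<in> carrier_vec (n + m) \<Longrightarrow>
    vec_first (x + y) n = vec_first x n + vec_first y n"
  by (rule eq_vecI) (auto simp: vec_first_def)

lemma vec_last_add:
  "x \<in> carrier_vec (n + m) \<Longrightarrow> y \<in> carrier_vec (n + m) \<Longrightarrow>
    vec_last (x + y) m = vec_last x m + vec_last y m"
  by (rule eq_vecI) (auto simp: vec_last_def)

lemma vec_first_smult: "x \<in> carrier_vec (n + m) \<Longrightarrow> vec_first (c \<cdot>\<^sub>v x) n = c \<cdot>\<^sub>v vec_first x n"
  by (rule eq_vecI) (auto simp: vec_first_def)

lemma vec_last_smult: "x \<in> carrier_vec (n + m) \<Longrightarrow> vec_last (c \<cdot>\<^sub>v x) m = c \<cdot>\<^sub>v vec_last x m"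
  by (rule eq_vecI) (auto simp: vec_last_def)

lemma smult_zero_vec: "(c :: 'a::mult_zero) \<cdot>\<^sub>v 0\<^sub>v n = 0\<^sub>v n"
  by (rule eq_vecI) auto

lemma subspace_vecI:
  fixes W :: "'a::field vec set"
  assumes "W \<subseteq> carrier_vec n" "0\<^sub>v n \<in> W" "\<And>u v. u \<in> W \<Longrightarrow> v \<in> W \<Longrightarrow> u + v \<in> W"
    "\<And>c u. u \<in> W \<Longrightarrow> c \<cdot>\<^sub>v u \<in> W"
  shows "subspace class_ring W (module_vec TYPE('a) n)"
  unfolding subspace_def submodule_def using assms vec_vs[of n] vec_module[of n]
  by (auto simp: module_vec_simps)

lemma subspace_vecD:
  fixes W :: "'a::field vec set"
  assumes "subspace class_ring W (module_vec TYPE('a) n)"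
  shows "W \<subseteq> carrier_vec n" "0\<^sub>v n \<in> W" "\<And>u v. u \<in> W \<Longrightarrow> v \<in> W \<Longrightarrow> u + v \<in> W"
    "\<And>c u. u \<in> W \<Longrightarrow> c \<cdot>\<^sub>v u \<in> W"
  using assms unfolding subspace_def submodule_def by (auto simp: module_vec_simps)

lemma fin_dim_subspace_vec:
  fixes W :: "'a::field vec set"
  assumes W: "subspace class_ring W (module_vec TYPE('a) n)"
  shows "vectorspace.fin_dim class_ring ((module_vec TYPE('a) n)\<lparr>carrier := W\<rparr>)"
proof -
  interpret V: vec_space "TYPE('a)" n .
  interpret S: vectorspace class_ring "V.vs W" using V.subspace_is_vs W by blast
  have W_submodule: "submodule class_ring W V.V" using W unfolding subspace_def by auto
  define P where "P = (\<lambda>A. A \<subseteq> carrier (V.vs W) \<and> S.lin_indpt A)"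
  have "finite A \<and> card A \<le> n" if "P A" for A
  proof -
    have AW: "A \<subseteq> W" using that unfolding P_def by auto
    then have "V.lin_indpt A"
      using that V.span_li_not_depend(2)[OF AW W_submodule] unfolding P_def by auto
    moreover have "A \<subseteq> carrier_vec n" using AW subspace_vecD(1)[OF W] by auto
    ultimately show ?thesis using V.li_le_dim[of A] V.dim_is_n by auto
  qed
  moreover have "P {}" unfolding P_def S.lin_dep_def by auto
  ultimately obtain A where A: "finite A" "maximal A P" using maximal_exists[of P n] by blast
  then have "S.gen_set A" "A \<subseteq> carrier (V.vs W)"
    using S.max_li_is_gen unfolding maximal_def P_def by auto
  then show ?thesis unfolding S.fin_dim_def using A(1) by blast
qed

lemma linear_map_vecI:
  fixes f :: "'a::field vec \<Rightarrow> 'a vec"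
  assumes W: "subspace class_ring W (module_vec TYPE('a) m)"
    and W': "subspace class_ring W' (module_vec TYPE('a) n)"
    and maps: "\<And>u. u \<in> W \<Longrightarrow> f u \<in> W'"
    and add: "\<And>u v. u \<in> W \<Longrightarrow> v \<in> W \<Longrightarrow> f (u + v) = f u + f v"
    and smult: "\<And>c u. u \<in> W \<Longrightarrow> f (c \<cdot>\<^sub>v u) = c \<cdot>\<^sub>v f u"
  shows "linear_map class_ring ((module_vec TYPE('a) m)\<lparr>carrier := W\<rparr>)
           ((module_vec TYPE('a) n)\<lparr>carrier := W'\<rparr>) f"
proof -
  interpret V: vec_space "TYPE('a)" m .
  interpret V': vec_space "TYPE('a)" n .
  interpret S: vectorspace class_ring "V.vs W" using V.subspace_is_vs W by blast
  interpret S': vectorspace class_ring "V'.vs W'" using V'.subspace_is_vs W' by blast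
  show ?thesis
  proof unfold_locales
    show "f \<in> LinearCombinations.module_hom class_ring (V.vs W) (V'.vs W')"
      unfolding LinearCombinations.module_hom_def Pi_def
      using maps add smult by (simp add: module_vec_simps)
  qed
qed

definition direct_sum_vec :: "'a vec set \<Rightarrow> 'a vec set \<Rightarrow> 'a vec set" where
  "direct_sum_vec W1 W2 = {u @\<^sub>v w | u w. u \<in> W1 \<and> w \<in> W2}"

lemma subspace_direct_sum_vec:
  fixes W1 :: "'a::field vec set"
  assumes W1: "subspace class_ring W1 (module_vec TYPE('a) n1)"
    and W2: "subspace class_ring W2 (module_vec TYPE('a) n2)"
  shows "subspace class_ring (direct_sum_vec W1 W2) (module_vec TYPE('a) (n1 + n2))"
proof (rule subspace_vecI)
  note W1 = subspace_vecD[OF W1] and W2 = subspace_vecD[OF W2]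
  show "direct_sum_vec W1 W2 \<subseteq> carrier_vec (n1 + n2)"
    using W1(1) W2(1) unfolding direct_sum_vec_def by auto
  show "0\<^sub>v (n1 + n2) \<in> direct_sum_vec W1 W2"
    using W1(2) W2(2) unfolding direct_sum_vec_def zero_append_zero_vec[symmetric] by blast
  show "x + y \<in> direct_sum_vec W1 W2" if "x \<in> direct_sum_vec W1 W2" "y \<in> direct_sum_vec W1 W2"
    for x y
  proof -
    from that obtain u w u' w' where
      x: "x = u @\<^sub>v w" "u \<in> W1" "w \<in> W2" and y: "y = u' @\<^sub>v w'" "u' \<in> W1" "w' \<in> W2"
      unfolding direct_sum_vec_def by auto
    have "x + y = (u + u') @\<^sub>v (w + w')"
      unfolding x y using W1(1) W2(1) x y by (intro append_vec_add) auto
    then show ?thesis unfolding direct_sum_vec_def using W1(3) W2(3) x y by blast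
  qed
  show "c \<cdot>\<^sub>v x \<in> direct_sum_vec W1 W2" if "x \<in> direct_sum_vec W1 W2" for c x
  proof -
    from that obtain u w where x: "x = u @\<^sub>v w" "u \<in> W1" "w \<in> W2"
      unfolding direct_sum_vec_def by auto
    then have "c \<cdot>\<^sub>v x = (c \<cdot>\<^sub>v u) @\<^sub>v (c \<cdot>\<^sub>v w)" by (simp add: smult_append_vec)
    then show ?thesis unfolding direct_sum_vec_def using W1(4) W2(4) x by blast
  qed
qed

lemma subspace_dim_zero_direct_sum_vec:
  fixes W :: "'a::field vec set"
  assumes W: "subspace class_ring W (module_vec TYPE('a) m)"
  shows "subspace_dim (n + m) (direct_sum_vec {0\<^sub>v n} W) = subspace_dim m W"
proof -
  interpret V: vec_space "TYPE('a)" "n + m" .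
  define K where "K = direct_sum_vec {0\<^sub>v n} W"
  have "subspace class_ring {0\<^sub>v n} (module_vec TYPE('a) n)"
    by (rule subspace_vecI) auto
  then have K: "subspace class_ring K (module_vec TYPE('a) (n + m))"
    unfolding K_def using subspace_direct_sum_vec W by blast
  have K_carrier: "K \<subseteq> carrier_vec (n + m)" using subspace_vecD(1)[OF K] .
  have last_K: "vec_last (0\<^sub>v n @\<^sub>v w) m = w" if "w \<in> W" for w
    using that subspace_vecD(1)[OF W] by (auto simp: vec_last_append)
  interpret S: linear_map class_ring "V.vs K" "(module_vec TYPE('a) m)\<lparr>carrier := W\<rparr>"
    "\<lambda>x. vec_last x m"
  proof (rule linear_map_vecI[OF K W])
    show "vec_last x m \<in> W" if "x \<in> K" for x
      using that last_K by (auto simp: K_def direct_sum_vec_def)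
    show "vec_last (x + y) m = vec_last x m + vec_last y m" if "x \<in> K" "y \<in> K" for x y
      using that K_carrier vec_last_add[of x n m y] by auto
    show "vec_last (c \<cdot>\<^sub>v x) m = c \<cdot>\<^sub>v vec_last x m" if "x \<in> K" for c x
      using that K_carrier vec_last_smult[of x n m] by auto
  qed
  have "inj_on (\<lambda>x. vec_last x m) K"
    using last_K by (auto simp: K_def direct_sum_vec_def inj_on_def)
  moreover have "(\<lambda>x. vec_last x m) ` K = W"
  proof
    show "(\<lambda>x. vec_last x m) ` K \<subseteq> W" using last_K by (auto simp: K_def direct_sum_vec_def)
    show "W \<subseteq> (\<lambda>x. vec_last x m) ` K"
    proof
      fix w assume "w \<in> W"
      then have "0\<^sub>v n @\<^sub>v w \<in> K" unfolding K_def direct_sum_vec_def by blast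
      with last_K[OF \<open>w \<in> W\<close>] show "w \<in> (\<lambda>x. vec_last x m) ` K" by (metis rev_image_eqI)
    qed
  qed
  ultimately have "S.V.dim = S.W.dim"
    using S.dim_eq[OF fin_dim_subspace_vec[OF K]] by simp
  then show ?thesis unfolding subspace_dim_def K_def by simp
qed

lemma subspace_dim_direct_sum_vec:
  fixes W1 :: "'a::field vec set"
  assumes W1: "subspace class_ring W1 (module_vec TYPE('a) n1)"
    and W2: "subspace class_ring W2 (module_vec TYPE('a) n2)"
  shows "subspace_dim (n1 + n2) (direct_sum_vec W1 W2) = subspace_dim n1 W1 + subspace_dim n2 W2"
proof -
  interpret V: vec_space "TYPE('a)" "n1 + n2" .
  define W where "W = direct_sum_vec W1 W2"
  have W: "subspace class_ring W (module_vec TYPE('a) (n1 + n2))"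
    unfolding W_def using subspace_direct_sum_vec W1 W2 by blast
  have W_carrier: "W \<subseteq> carrier_vec (n1 + n2)" using subspace_vecD(1)[OF W] .
  have first_W: "vec_first (u @\<^sub>v w) n1 = u" if "u \<in> W1" for u w
    using that subspace_vecD(1)[OF W1] by (auto simp: vec_first_append)
  interpret T: linear_map class_ring "V.vs W" "(module_vec TYPE('a) n1)\<lparr>carrier := W1\<rparr>"
    "\<lambda>x. vec_first x n1"
  proof (rule linear_map_vecI[OF W W1])
    show "vec_first x n1 \<in> W1" if "x \<in> W" for x
      using that first_W by (auto simp: W_def direct_sum_vec_def)
    show "vec_first (x + y) n1 = vec_first x n1 + vec_first y n1" if "x \<in> W" "y \<in> W" for x y
      using that W_carrier vec_first_add[of x n1 n2 y] by auto
    show "vec_first (c \<cdot>\<^sub>v x) n1 = c \<cdot>\<^sub>v vec_first x n1" if "x \<in> W" for c x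
      using that W_carrier vec_first_smult[of x n1 n2] by auto
  qed
  have "T.imT = W1"
  proof -
    have "W1 \<subseteq> (\<lambda>x. vec_first x n1) ` W"
    proof
      fix u assume u: "u \<in> W1"
      then have "u @\<^sub>v 0\<^sub>v n2 \<in> W"
        using subspace_vecD(2)[OF W2] unfolding W_def direct_sum_vec_def by blast
      then show "u \<in> (\<lambda>x. vec_first x n1) ` W" by (rule rev_image_eqI) (simp add: first_W[OF u])
    qed
    moreover have "(\<lambda>x. vec_first x n1) ` W \<subseteq> W1"
      using first_W by (auto simp: W_def direct_sum_vec_def)
    ultimately show ?thesis unfolding T.im_def by auto
  qed
  moreover have "T.kerT = direct_sum_vec {0\<^sub>v n1} W2"
  proof -
    have "{x \<in> W. vec_first x n1 = 0\<^sub>v n1} = direct_sum_vec {0\<^sub>v n1} W2"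
      using first_W subspace_vecD(2)[OF W1] by (auto simp: W_def direct_sum_vec_def)
    then show ?thesis unfolding T.ker_def by (simp add: module_vec_simps)
  qed
  ultimately have "subspace_dim n1 W1 + subspace_dim (n1 + n2) (direct_sum_vec {0\<^sub>v n1} W2)
      = subspace_dim (n1 + n2) W"
    using T.rank_nullity[OF fin_dim_subspace_vec[OF W]] unfolding subspace_dim_def by simp
  with subspace_dim_zero_direct_sum_vec[OF W2, of n1] show ?thesis
    unfolding W_def by linarith
qed

lemma direct_sum_vec_zero_dim: "W \<subseteq> carrier_vec n \<Longrightarrow> direct_sum_vec W {0\<^sub>v 0} = W"
proof -
  have "u @\<^sub>v 0\<^sub>v 0 = u" for u :: "'a vec" by (rule eq_vecI) auto
  then show "direct_sum_vec W {0\<^sub>v 0} = W" unfolding direct_sum_vec_def by auto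
qed

lemma subspace_dim_carrier_vec: "subspace_dim n (carrier_vec n :: 'a::field vec set) = n"
proof -
  interpret V: vec_space "TYPE('a)" n .
  have "(module_vec TYPE('a) n)\<lparr>carrier := carrier_vec n\<rparr> = module_vec TYPE('a) n"
    by (simp add: module_vec_def)
  then show ?thesis unfolding subspace_dim_def by (simp only:) (rule V.dim_is_n)
qed

section \<open>Chain sequences of a pencil\<close>

(* At \<infinity> both matrices are read off the reversed pencil A1 + s A0 at s = 0. *)

definition pencil_val :: "'a::field mat \<Rightarrow> 'a mat \<Rightarrow> 'a ext_pt \<Rightarrow> 'a mat" where
  "pencil_val A0 A1 lam = (case lam of Fin l \<Rightarrow> A0 + l \<cdot>\<^sub>m A1 | Infty \<Rightarrow> A1)"

definition pencil_deriv :: "'a::field mat \<Rightarrow> 'a mat \<Rightarrow> 'a ext_pt \<Rightarrow> 'a mat" where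
  "pencil_deriv A0 A1 lam = (case lam of Fin l \<Rightarrow> A1 | Infty \<Rightarrow> A0)"

definition chain_seq :: "'a::field mat \<Rightarrow> 'a mat \<Rightarrow> 'a vec list \<Rightarrow> bool" where
  "chain_seq N E xs \<longleftrightarrow>
     (\<forall>i<length xs. N *\<^sub>v xs ! i = (if i = 0 then 0\<^sub>v (dim_row N) else - (E *\<^sub>v xs ! (i - 1))))"

lemma pencil_val_carrier:
  "A0 \<in> carrier_mat p q \<Longrightarrow> A1 \<in> carrier_mat p q \<Longrightarrow> pencil_val A0 A1 lam \<in> carrier_mat p q"
  by (cases lam) (auto simp: pencil_val_def)

lemma pencil_deriv_carrier:
  "A0 \<in> carrier_mat p q \<Longrightarrow> A1 \<in> carrier_mat p q \<Longrightarrow> pencil_deriv A0 A1 lam \<in> carrier_mat p q"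
  by (cases lam) (auto simp: pencil_deriv_def)

lemma jordan_chain_iff_chain_seq:
  assumes A: "A0 \<in> carrier_mat p q" "A1 \<in> carrier_mat p q"
  shows "jordan_chain A0 A1 lam xs \<longleftrightarrow> xs \<noteq> [] \<and> set xs \<subseteq> carrier_vec q \<and> xs ! 0 \<noteq> 0\<^sub>v q \<and>
    chain_seq (pencil_val A0 A1 lam) (pencil_deriv A0 A1 lam) xs"
proof (cases "xs = []")
  case False
  have split_first: "(\<forall>i<length xs. P i) \<longleftrightarrow> P 0 \<and> (\<forall>i. 1 \<le> i \<and> i < length xs \<longrightarrow> P i)" for P
    using False by (metis length_greater_0_conv less_one linorder_not_less)
  have "dim_row (pencil_val A0 A1 lam) = p" using pencil_val_carrier[OF A] by blast
  with A False show ?thesis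
    unfolding jordan_chain_def chain_seq_def split_first
    by (cases lam) (auto simp: pencil_val_def pencil_deriv_def)
qed (simp add: jordan_chain_def)

lemma chain_seq_Cons_zero:
  assumes "N \<in> carrier_mat r n" "E \<in> carrier_mat r n" "chain_seq N E (0\<^sub>v n # xs)"
  shows "chain_seq N E xs"
  unfolding chain_seq_def
proof (intro allI impI)
  fix i assume "i < length xs"
  then have "N *\<^sub>v xs ! i = - (E *\<^sub>v (0\<^sub>v n # xs) ! i)"
    using assms(3) unfolding chain_seq_def
    by (metis Suc_less_eq diff_Suc_1 length_Cons nat.distinct(1) nth_Cons_Suc)
  then show "N *\<^sub>v xs ! i = (if i = 0 then 0\<^sub>v (dim_row N) else - (E *\<^sub>v xs ! (i - 1)))"
    using assms(1,2) by (cases i) auto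
qed

lemma jordan_space_subspace:
  fixes A0 :: "'a::field mat"
  assumes "A0 \<in> carrier_mat p q"
  shows "subspace class_ring (jordan_space l A0 A1 lam) (module_vec TYPE('a) q)"
proof -
  have q: "dim_col A0 = q" using assms by blast
  interpret V: vec_space "TYPE('a)" q .
  have "{v. \<exists>xs. jordan_chain A0 A1 lam xs \<and> length xs \<le> l \<and> v \<in> set xs} \<subseteq> carrier_vec q"
    unfolding jordan_chain_def q by auto
  then show ?thesis
    unfolding jordan_space_def q by (auto intro: V.span_is_subspace subspace_vecI)
qed

lemma chain_seq_subset_jordan_space:
  assumes A: "A0 \<in> carrier_mat p q" "A1 \<in> carrier_mat p q"
  shows "chain_seq (pencil_val A0 A1 lam) (pencil_deriv A0 A1 lam) xs \<Longrightarrow> set xs \<subseteq> carrier_vec q \<Longrightarrow>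
    length xs \<le> l \<Longrightarrow> set xs \<subseteq> jordan_space l A0 A1 lam"
proof (induction xs)
  case (Cons x xs)
  interpret V: vec_space "TYPE('a)" q .
  note L = subspace_vecD[OF jordan_space_subspace[OF A(1)]]
  show ?case
  proof (cases "x = 0\<^sub>v q")
    case True
    then have "chain_seq (pencil_val A0 A1 lam) (pencil_deriv A0 A1 lam) (0\<^sub>v q # xs)"
      using Cons.prems(1) by simp
    then have "chain_seq (pencil_val A0 A1 lam) (pencil_deriv A0 A1 lam) xs"
      by (rule chain_seq_Cons_zero[OF pencil_val_carrier[OF A] pencil_deriv_carrier[OF A]])
    then show ?thesis using Cons True L(2) by auto
  next
    case False
    define G where "G = {v. \<exists>xs. jordan_chain A0 A1 lam xs \<and> length xs \<le> l \<and> v \<in> set xs}"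
    have "jordan_chain A0 A1 lam (x # xs)"
      unfolding jordan_chain_iff_chain_seq[OF A] using False Cons.prems by auto
    then have "set (x # xs) \<subseteq> G" unfolding G_def using Cons.prems(3) by blast
    moreover have "G \<subseteq> V.span G"
      using A by (intro V.in_own_span) (auto simp: G_def jordan_chain_def)
    moreover have "jordan_space l A0 A1 lam = V.span G"
      using A Cons.prems(3) by (simp add: jordan_space_def G_def)
    ultimately show ?thesis by auto
  qed
qed simp

lemma jordan_space_image_subset:
  fixes f :: "'a::field vec \<Rightarrow> 'a vec"
  assumes A: "A0 \<in> carrier_mat p q" "A1 \<in> carrier_mat p q"
    and B: "B0 \<in> carrier_mat p' q'" "B1 \<in> carrier_mat p' q'"
    and f_carrier: "\<And>u. u \<in> carrier_vec q \<Longrightarrow> f u \<in> carrier_vec q'"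
    and f_add: "\<And>u v. u \<in> carrier_vec q \<Longrightarrow> v \<in> carrier_vec q \<Longrightarrow> f (u + v) = f u + f v"
    and f_smult: "\<And>c u. u \<in> carrier_vec q \<Longrightarrow> f (c \<cdot>\<^sub>v u) = c \<cdot>\<^sub>v f u"
    and f_chain: "\<And>xs. set xs \<subseteq> carrier_vec q \<Longrightarrow>
      chain_seq (pencil_val A0 A1 lam) (pencil_deriv A0 A1 lam) xs \<Longrightarrow>
      chain_seq (pencil_val B0 B1 lam) (pencil_deriv B0 B1 lam) (map f xs)"
  shows "f ` jordan_space l A0 A1 lam \<subseteq> jordan_space l B0 B1 lam"
proof -
  interpret V: vec_space "TYPE('a)" q .
  note LB = subspace_vecD[OF jordan_space_subspace[OF B(1), where l=l and lam=lam]]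
  have f_zero: "f (0\<^sub>v q) = 0\<^sub>v q'"
  proof -
    have "f (0\<^sub>v q) = 0 \<cdot>\<^sub>v f (0\<^sub>v q)" using f_smult[of "0\<^sub>v q" 0] by simp
    also have "\<dots> = 0\<^sub>v q'" using f_carrier[of "0\<^sub>v q"] by (intro eq_vecI) auto
    finally show ?thesis .
  qed
  define P where "P = {u \<in> carrier_vec q. f u \<in> jordan_space l B0 B1 lam}"
  have "jordan_space l A0 A1 lam \<subseteq> P"
  proof (cases "l = 0")
    case True
    then show ?thesis using A LB(2) f_zero by (simp add: jordan_space_def P_def)
  next
    case False
    have "subspace class_ring P (module_vec TYPE('a) q)"
      by (rule subspace_vecI) (auto simp: P_def f_zero f_add f_smult LB(2-4))
    then have P: "submodule class_ring P V.V" unfolding subspace_def by blast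
    have "v \<in> P" if "jordan_chain A0 A1 lam xs" "length xs \<le> l" "v \<in> set xs" for v xs
    proof -
      have xs: "set xs \<subseteq> carrier_vec q" "chain_seq (pencil_val A0 A1 lam) (pencil_deriv A0 A1 lam) xs"
        using that(1) jordan_chain_iff_chain_seq[OF A] by auto
      then have "set (map f xs) \<subseteq> jordan_space l B0 B1 lam"
        using f_chain f_carrier that(2) by (intro chain_seq_subset_jordan_space[OF B]) auto
      then show ?thesis using xs(1) that(3) unfolding P_def by auto
    qed
    then have "V.span {v. \<exists>xs. jordan_chain A0 A1 lam xs \<and> length xs \<le> l \<and> v \<in> set xs} \<subseteq> P"
      by (intro V.span_is_subset[OF _ P]) blast
    moreover have "dim_col A0 = q" using A by blast
    ultimately show ?thesis using False unfolding jordan_space_def by simp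
  qed
  then show ?thesis unfolding P_def by auto
qed

lemma jordan_space_no_rows:
  assumes "A0 \<in> carrier_mat 0 q" "A1 \<in> carrier_mat 0 q" "l \<noteq> 0"
  shows "jordan_space l A0 A1 lam = carrier_vec q"
proof
  show "jordan_space l A0 A1 lam \<subseteq> carrier_vec q"
    using subspace_vecD(1)[OF jordan_space_subspace[OF assms(1)]] .
  show "carrier_vec q \<subseteq> jordan_space l A0 A1 lam"
  proof
    fix v :: "'a vec" assume v: "v \<in> carrier_vec q"
    have "dim_row (pencil_val A0 A1 lam) = 0" using pencil_val_carrier[OF assms(1,2)] by blast
    then have "chain_seq (pencil_val A0 A1 lam) (pencil_deriv A0 A1 lam) [v]"
      unfolding chain_seq_def by (auto intro!: eq_vecI)
    then have "set [v] \<subseteq> jordan_space l A0 A1 lam"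
      using v assms(3) by (intro chain_seq_subset_jordan_space[OF assms(1,2)]) auto
    then show "v \<in> jordan_space l A0 A1 lam" by simp
  qed
qed

lemma jordan_space_no_cols:
  fixes A0 :: "'a::field mat"
  assumes "A0 \<in> carrier_mat p 0"
  shows "jordan_space l A0 A1 lam = {0\<^sub>v 0}"
proof -
  have "subspace class_ring (jordan_space l A0 A1 lam) (module_vec TYPE('a) 0)"
    by (rule jordan_space_subspace[OF assms])
  note L = subspace_vecD[OF this]
  show ?thesis
  proof (intro equalityI subsetI)
    fix v assume "v \<in> jordan_space l A0 A1 lam"
    then have "v \<in> carrier_vec 0" using L(1) by blast
    then have "dim_vec v = 0" by (rule carrier_vecD)
    then show "v \<in> {0\<^sub>v 0}" by simp
  qed (use L(2) in simp)
qed

section \<open>Block-diagonal pencils\<close>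

lemma uminus_append_vec: "- (u @\<^sub>v w) = (- u) @\<^sub>v (- w :: 'a::ab_group_add vec)"
  by (rule eq_vecI) (auto simp: append_vec_def Let_def)

lemma four_block_diag_mult_append_vec:
  assumes "M \<in> carrier_mat p1 q1" "M' \<in> carrier_mat p2 q2" "u \<in> carrier_vec q1" "w \<in> carrier_vec q2"
  shows "four_block_mat M (0\<^sub>m p1 q2) (0\<^sub>m p2 q1) M' *\<^sub>v (u @\<^sub>v w) = (M *\<^sub>v u) @\<^sub>v (M' *\<^sub>v w)"
  using assms by (subst four_block_mat_mult_vec[OF assms(1) _ _ assms(2)]) auto

lemma chain_seq_four_block_diag:
  assumes N: "N1 \<in> carrier_mat p1 q1" "N2 \<in> carrier_mat p2 q2"
    and E: "E1 \<in> carrier_mat p1 q1" "E2 \<in> carrier_mat p2 q2"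
    and xs: "set xs \<subseteq> carrier_vec (q1 + q2)"
  shows "chain_seq (four_block_mat N1 (0\<^sub>m p1 q2) (0\<^sub>m p2 q1) N2)
      (four_block_mat E1 (0\<^sub>m p1 q2) (0\<^sub>m p2 q1) E2) xs \<longleftrightarrow>
    chain_seq N1 E1 (map (\<lambda>x. vec_first x q1) xs) \<and> chain_seq N2 E2 (map (\<lambda>x. vec_last x q2) xs)"
proof -
  let ?N = "four_block_mat N1 (0\<^sub>m p1 q2) (0\<^sub>m p2 q1) N2"
  let ?E = "four_block_mat E1 (0\<^sub>m p1 q2) (0\<^sub>m p2 q1) E2"
  let ?xs1 = "map (\<lambda>x. vec_first x q1) xs" and ?xs2 = "map (\<lambda>x. vec_last x q2) xs"
  have idx: "?N *\<^sub>v xs ! i = (if i = 0 then 0\<^sub>v (p1 + p2) else - (?E *\<^sub>v xs ! (i - 1))) \<longleftrightarrow>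
      N1 *\<^sub>v ?xs1 ! i = (if i = 0 then 0\<^sub>v p1 else - (E1 *\<^sub>v ?xs1 ! (i - 1))) \<and>
      N2 *\<^sub>v ?xs2 ! i = (if i = 0 then 0\<^sub>v p2 else - (E2 *\<^sub>v ?xs2 ! (i - 1)))"
    if i: "i < length xs" for i
  proof -
    define u w u' w' where "u = vec_first (xs ! i) q1" and "w = vec_last (xs ! i) q2"
      and "u' = vec_first (xs ! (i - 1)) q1" and "w' = vec_last (xs ! (i - 1)) q2"
    have carrier: "u \<in> carrier_vec q1" "w \<in> carrier_vec q2" "u' \<in> carrier_vec q1" "w' \<in> carrier_vec q2"
      unfolding u_def w_def u'_def w'_def by simp_all
    have "xs ! i = u @\<^sub>v w" "xs ! (i - 1) = u' @\<^sub>v w'"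
      using i xs unfolding u_def w_def u'_def w'_def by (auto intro!: vec_first_last_append[symmetric])
    then have "?N *\<^sub>v xs ! i = (N1 *\<^sub>v u) @\<^sub>v (N2 *\<^sub>v w)"
      and "(if i = 0 then 0\<^sub>v (p1 + p2) else - (?E *\<^sub>v xs ! (i - 1))) =
        (if i = 0 then 0\<^sub>v p1 else - (E1 *\<^sub>v u')) @\<^sub>v (if i = 0 then 0\<^sub>v p2 else - (E2 *\<^sub>v w'))"
      using N E carrier
      by (simp_all add: four_block_diag_mult_append_vec uminus_append_vec zero_append_zero_vec)
    moreover have "N1 *\<^sub>v u \<in> carrier_vec p1" "(if i = 0 then 0\<^sub>v p1 else - (E1 *\<^sub>v u')) \<in> carrier_vec p1"
      using N E carrier by auto
    moreover have "?xs1 ! i = u" "?xs2 ! i = w" "?xs1 ! (i - 1) = u'" "?xs2 ! (i - 1) = w'"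
      using i unfolding u_def w_def u'_def w'_def by simp_all
    ultimately show ?thesis by (simp only: append_vec_eq)
  qed
  have dims: "dim_row ?N = p1 + p2" "dim_row N1 = p1" "dim_row N2 = p2" using N by auto
  show ?thesis unfolding chain_seq_def length_map dims using idx by blast
qed

lemma pencil_deriv_four_block_diag:
  "pencil_deriv (four_block_mat C0 B C D0) (four_block_mat C1 B C D1) lam =
    four_block_mat (pencil_deriv C0 C1 lam) B C (pencil_deriv D0 D1 lam)"
  by (cases lam) (simp_all add: pencil_deriv_def)

lemma chain_seq_zeros:
  "N \<in> carrier_mat r n \<Longrightarrow> E \<in> carrier_mat r n \<Longrightarrow> chain_seq N E (map (\<lambda>_. 0\<^sub>v n) xs)"
  unfolding chain_seq_def by auto

context
  fixes C0 C1 D0 D1 :: "'a::field mat" and p1 q1 p2 q2 :: nat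
  assumes C: "C0 \<in> carrier_mat p1 q1" "C1 \<in> carrier_mat p1 q1"
    and D: "D0 \<in> carrier_mat p2 q2" "D1 \<in> carrier_mat p2 q2"
begin

abbreviation diag :: "'a mat \<Rightarrow> 'a mat \<Rightarrow> 'a mat" where
  "diag M N \<equiv> four_block_mat M (0\<^sub>m p1 q2) (0\<^sub>m p2 q1) N"

lemma diag_carrier:
  "diag C0 D0 \<in> carrier_mat (p1 + p2) (q1 + q2)" "diag C1 D1 \<in> carrier_mat (p1 + p2) (q1 + q2)"
  using C D by auto

lemma pencil_val_four_block_diag:
  "pencil_val (diag C0 D0) (diag C1 D1) lam =
    four_block_mat (pencil_val C0 C1 lam) (0\<^sub>m p1 q2) (0\<^sub>m p2 q1) (pencil_val D0 D1 lam)"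
proof (cases lam)
  case (Fin l)
  have "l \<cdot>\<^sub>m diag C1 D1 = four_block_mat (l \<cdot>\<^sub>m C1) (0\<^sub>m p1 q2) (0\<^sub>m p2 q1) (l \<cdot>\<^sub>m D1)"
    using C D by (subst smult_four_block_mat) auto
  with Fin C D show ?thesis
    by (simp add: pencil_val_def, subst add_four_block_mat[of _ p1 q1 _ q2 _ p2]) auto
qed (simp add: pencil_val_def)

lemma chain_seq_pencil_four_block_diag:
  assumes "set xs \<subseteq> carrier_vec (q1 + q2)"
  shows "chain_seq (pencil_val (diag C0 D0) (diag C1 D1) lam) (pencil_deriv (diag C0 D0) (diag C1 D1) lam) xs
    \<longleftrightarrow>
    chain_seq (pencil_val C0 C1 lam) (pencil_deriv C0 C1 lam) (map (\<lambda>x. vec_first x q1) xs) \<and>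
    chain_seq (pencil_val D0 D1 lam) (pencil_deriv D0 D1 lam) (map (\<lambda>x. vec_last x q2) xs)"
  unfolding pencil_val_four_block_diag pencil_deriv_four_block_diag
  using C D assms by (intro chain_seq_four_block_diag pencil_val_carrier pencil_deriv_carrier)

lemma jordan_space_four_block_diag_subset:
  "jordan_space l (diag C0 D0) (diag C1 D1) lam \<subseteq>
    direct_sum_vec (jordan_space l C0 C1 lam) (jordan_space l D0 D1 lam)"
proof
  fix v assume v: "v \<in> jordan_space l (diag C0 D0) (diag C1 D1) lam"
  have "(\<lambda>x. vec_first x q1) ` jordan_space l (diag C0 D0) (diag C1 D1) lam \<subseteq>
      jordan_space l C0 C1 lam"
    by (rule jordan_space_image_subset[OF diag_carrier C])
      (auto simp: chain_seq_pencil_four_block_diag vec_first_add vec_first_smult)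
  moreover have "(\<lambda>x. vec_last x q2) ` jordan_space l (diag C0 D0) (diag C1 D1) lam \<subseteq>
      jordan_space l D0 D1 lam"
    by (rule jordan_space_image_subset[OF diag_carrier D])
      (auto simp: chain_seq_pencil_four_block_diag vec_last_add vec_last_smult)
  moreover have "jordan_space l (diag C0 D0) (diag C1 D1) lam \<subseteq> carrier_vec (q1 + q2)"
    by (rule subspace_vecD(1)[OF jordan_space_subspace[OF diag_carrier(1)]])
  then have "v = vec_first v q1 @\<^sub>v vec_last v q2" using v by auto
  ultimately show "v \<in> direct_sum_vec (jordan_space l C0 C1 lam) (jordan_space l D0 D1 lam)"
    using v unfolding direct_sum_vec_def by blast
qed

lemma image_append_zero_jordan_space_subset:
  "(\<lambda>u. u @\<^sub>v 0\<^sub>v q2) ` jordan_space l C0 C1 lam \<subseteq> jordan_space l (diag C0 D0) (diag C1 D1) lam"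
proof (rule jordan_space_image_subset[OF C diag_carrier])
  fix xs assume "set xs \<subseteq> carrier_vec q1" "chain_seq (pencil_val C0 C1 lam) (pencil_deriv C0 C1 lam) xs"
  moreover have "map (\<lambda>x. vec_first x q1) (map (\<lambda>u. u @\<^sub>v 0\<^sub>v q2) xs) = xs"
    using \<open>set xs \<subseteq> carrier_vec q1\<close> by (induction xs) (auto simp: vec_first_append)
  ultimately show
    "chain_seq (pencil_val (diag C0 D0) (diag C1 D1) lam) (pencil_deriv (diag C0 D0) (diag C1 D1) lam)
      (map (\<lambda>u. u @\<^sub>v 0\<^sub>v q2) xs)"
    using chain_seq_zeros[OF pencil_val_carrier[OF D] pencil_deriv_carrier[OF D]]
    by (subst chain_seq_pencil_four_block_diag) (auto simp: vec_last_append comp_def)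
qed (auto simp: append_vec_add[symmetric] smult_append_vec smult_zero_vec)

lemma image_zero_append_jordan_space_subset:
  "(\<lambda>w. 0\<^sub>v q1 @\<^sub>v w) ` jordan_space l D0 D1 lam \<subseteq> jordan_space l (diag C0 D0) (diag C1 D1) lam"
proof (rule jordan_space_image_subset[OF D diag_carrier])
  fix xs assume "set xs \<subseteq> carrier_vec q2" "chain_seq (pencil_val D0 D1 lam) (pencil_deriv D0 D1 lam) xs"
  moreover have "map (\<lambda>x. vec_last x q2) (map (\<lambda>w. 0\<^sub>v q1 @\<^sub>v w) xs) = xs"
    using \<open>set xs \<subseteq> carrier_vec q2\<close> by (induction xs) (auto simp: vec_last_append)
  ultimately show
    "chain_seq (pencil_val (diag C0 D0) (diag C1 D1) lam) (pencil_deriv (diag C0 D0) (diag C1 D1) lam)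
      (map (\<lambda>w. 0\<^sub>v q1 @\<^sub>v w) xs)"
    using chain_seq_zeros[OF pencil_val_carrier[OF C] pencil_deriv_carrier[OF C]]
    by (subst chain_seq_pencil_four_block_diag) (auto simp: vec_first_append comp_def)
qed (auto simp: append_vec_add[symmetric] smult_append_vec smult_zero_vec)

lemma direct_sum_vec_subset_jordan_space_four_block_diag:
  "direct_sum_vec (jordan_space l C0 C1 lam) (jordan_space l D0 D1 lam) \<subseteq>
    jordan_space l (diag C0 D0) (diag C1 D1) lam"
proof
  fix v assume "v \<in> direct_sum_vec (jordan_space l C0 C1 lam) (jordan_space l D0 D1 lam)"
  then obtain u w where v: "v = u @\<^sub>v w" "u \<in> jordan_space l C0 C1 lam" "w \<in> jordan_space l D0 D1 lam"
    unfolding direct_sum_vec_def by blast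
  have "jordan_space l C0 C1 lam \<subseteq> carrier_vec q1" "jordan_space l D0 D1 lam \<subseteq> carrier_vec q2"
    by (rule subspace_vecD(1)[OF jordan_space_subspace[OF C(1)]]
        subspace_vecD(1)[OF jordan_space_subspace[OF D(1)]])+
  then have "u \<in> carrier_vec q1" "w \<in> carrier_vec q2" using v by auto
  then have "v = (u @\<^sub>v 0\<^sub>v q2) + (0\<^sub>v q1 @\<^sub>v w)"
    using append_vec_add[of u q1 "0\<^sub>v q1" "0\<^sub>v q2" q2 w] v(1) by simp
  moreover have "u @\<^sub>v 0\<^sub>v q2 \<in> jordan_space l (diag C0 D0) (diag C1 D1) lam"
    using image_append_zero_jordan_space_subset v(2) by blast
  moreover have "0\<^sub>v q1 @\<^sub>v w \<in> jordan_space l (diag C0 D0) (diag C1 D1) lam"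
    using image_zero_append_jordan_space_subset v(3) by blast
  moreover have
    "subspace class_ring (jordan_space l (diag C0 D0) (diag C1 D1) lam) (module_vec TYPE('a) (q1 + q2))"
    by (rule jordan_space_subspace[OF diag_carrier(1)])
  ultimately show "v \<in> jordan_space l (diag C0 D0) (diag C1 D1) lam" using subspace_vecD(3) by metis
qed

lemma jordan_space_four_block_diag:
  "jordan_space l (diag C0 D0) (diag C1 D1) lam =
    direct_sum_vec (jordan_space l C0 C1 lam) (jordan_space l D0 D1 lam)"
  using jordan_space_four_block_diag_subset direct_sum_vec_subset_jordan_space_four_block_diag
  by (rule equalityI)

lemma subspace_dim_jordan_space_four_block_diag:
  "subspace_dim (q1 + q2) (jordan_space i (diag C0 D0) (diag C1 D1) lam) =
    subspace_dim q1 (jordan_space i C0 C1 lam) + subspace_dim q2 (jordan_space i D0 D1 lam)"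
  unfolding jordan_space_four_block_diag
  by (intro subspace_dim_direct_sum_vec jordan_space_subspace[OF C(1)] jordan_space_subspace[OF D(1)])

end

lemma subspace_dim_jordan_space_append_zero_cols:
  assumes "C0 \<in> carrier_mat p q1" "C1 \<in> carrier_mat p q1" "i \<noteq> 0"
  shows "subspace_dim (q1 + q2) (jordan_space i (four_block_mat C0 (0\<^sub>m p q2) (0\<^sub>m 0 q1) (0\<^sub>m 0 q2))
      (four_block_mat C1 (0\<^sub>m p q2) (0\<^sub>m 0 q1) (0\<^sub>m 0 q2)) lam) =
    subspace_dim q1 (jordan_space i C0 C1 lam) + q2"
proof -
  have zero: "(0\<^sub>m 0 q2 :: 'a mat) \<in> carrier_mat 0 q2" by simp
  show ?thesis
    using subspace_dim_jordan_space_four_block_diag[OF assms(1,2) zero zero, where i=i and lam=lam]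
    unfolding jordan_space_no_rows[OF zero zero assms(3)] subspace_dim_carrier_vec .
qed

lemma jordan_space_append_zero_rows:
  assumes C: "C0 \<in> carrier_mat p1 q" "C1 \<in> carrier_mat p1 q"
  shows "jordan_space l (C0 @\<^sub>r 0\<^sub>m p2 q) (C1 @\<^sub>r 0\<^sub>m p2 q) lam = jordan_space l C0 C1 lam"
proof -
  have zero: "(0\<^sub>m p2 0 :: 'a mat) \<in> carrier_mat p2 0" by simp
  have "M @\<^sub>r 0\<^sub>m p2 q = four_block_mat M (0\<^sub>m p1 0) (0\<^sub>m p2 q) (0\<^sub>m p2 0)"
    if "M \<in> carrier_mat p1 q" for M :: "'a mat"
    using that unfolding append_rows_def by auto
  then have "jordan_space l (C0 @\<^sub>r 0\<^sub>m p2 q) (C1 @\<^sub>r 0\<^sub>m p2 q) lam =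
      direct_sum_vec (jordan_space l C0 C1 lam) {0\<^sub>v 0}"
    using jordan_space_four_block_diag[OF C zero zero] jordan_space_no_cols[OF zero] C by simp
  also have "\<dots> = jordan_space l C0 C1 lam"
    using subspace_vecD(1)[OF jordan_space_subspace[OF C(1)]] by (rule direct_sum_vec_zero_dim)
  finally show ?thesis .
qed

theorem proposition3p6:
  fixes lam :: "'a::alg_closed_field ext_pt"
  shows
  "(\<forall>p1 q1 p2 q2 (C0::'a mat) C1 D0 D1.
      C0 \<in> carrier_mat p1 q1 \<longrightarrow> C1 \<in> carrier_mat p1 q1 \<longrightarrow>
      D0 \<in> carrier_mat p2 q2 \<longrightarrow> D1 \<in> carrier_mat p2 q2 \<longrightarrow>
      (\<forall>i. subspace_dim (q1 + q2)
             (jordan_space i (four_block_mat C0 (0\<^sub>m p1 q2) (0\<^sub>m p2 q1) D0)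
                             (four_block_mat C1 (0\<^sub>m p1 q2) (0\<^sub>m p2 q1) D1) lam)
           = subspace_dim q1 (jordan_space i C0 C1 lam)
             + subspace_dim q2 (jordan_space i D0 D1 lam)))
   \<and>
   (\<forall>p q1 q2 (C0::'a mat) C1.
      C0 \<in> carrier_mat p q1 \<longrightarrow> C1 \<in> carrier_mat p q1 \<longrightarrow>
      (\<forall>i\<ge>1. subspace_dim (q1 + q2)
             (jordan_space i (four_block_mat C0 (0\<^sub>m p q2) (0\<^sub>m 0 q1) (0\<^sub>m 0 q2))
                             (four_block_mat C1 (0\<^sub>m p q2) (0\<^sub>m 0 q1) (0\<^sub>m 0 q2)) lam)
           = subspace_dim q1 (jordan_space i C0 C1 lam) + q2))
   \<and>
   (\<forall>p1 p2 q (C0::'a mat) C1.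
      C0 \<in> carrier_mat p1 q \<longrightarrow> C1 \<in> carrier_mat p1 q \<longrightarrow>
      (\<forall>i. subspace_dim q
             (jordan_space i (C0 @\<^sub>r 0\<^sub>m p2 q) (C1 @\<^sub>r 0\<^sub>m p2 q) lam)
           = subspace_dim q (jordan_space i C0 C1 lam)))"
  by (intro conjI allI impI)
    (simp add: subspace_dim_jordan_space_four_block_diag,
     simp add: subspace_dim_jordan_space_append_zero_cols,
     simp add: jordan_space_append_zero_rows)

end
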